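(* Let $\mathcal{T}=[A,B]$, let $\nu$ be a measure on the Borel sets of $[A,B]$ with positive density, and consider the regression model $y(t)=\theta^Tf(t)+\epsilon(t)$, $\theta\in\mathbb{R}^m$ unknown, with $y$ observed on $[A,B]$ and zero-mean errors with covariance kernel $K$. Let $\phi_1,\phi_2,\dots$ be the eigenfunctions, orthonormal in $L_2(\nu,[A,B])$, with positive eigenvalues $\lambda_1,\lambda_2,\dots$, of the integral operator $T_K(h)(\cdot)=\int_A^BK(t,\cdot)h(t)\nu(dt)$ on $L_2(\nu,[A,B])$. Suppose $f(t)=\sum_{\ell=1}^\infty q_\ell\phi_\ell(t)$ for some sequence $(q_\ell)_{\ell\in\mathbb{N}}$ in $\mathbb{R}^m$ such that $f_1,\dots,f_m$ are linearly independent. Then the estimator $\hat\theta_G=\int_{\mathcal{T}}y(t)G(dt)$ with $G(dt)=C^{-1}\sum_{\ell=1}^\infty\lambda_\ell^{-1}q_\ell\phi_\ell(t)\nu(dt)$ and $C=\sum_{\ell=1}^\infty\lambda_\ell^{-1}q_\ell q_\ell^T$ is a BLUE with covariance matrix $C^{-1}$.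
   Context: A BLUE is an unbiased estimator of the form $\int_{\mathcal{T}}y(t)H(dt)$ ($H$ a signed $\mathbb{R}^m$-valued measure) with minimal covariance matrix $\int\int K(t,s)H(dt)H^T(ds)$ in Loewner order among such unbiased estimators. *)

theory Defs
  imports "HOL-Analysis.Analysis"
begin

text \<open>A finite signed Borel measure on [A,B], represented by a pair (P, N)
  of finite Borel measures on [A,B] (the signed measure being P - N).\<close>
type_synonym smeasure = "real measure \<times> real measure"

definition fin_smeasure :: "real \<Rightarrow> real \<Rightarrow> smeasure \<Rightarrow> bool" where
  "fin_smeasure A B H \<longleftrightarrow>
     sets (fst H) = sets (restrict_space borel {A..B}) \<and>
     sets (snd H) = sets (restrict_space borel {A..B}) \<and>
     finite_measure (fst H) \<and> finite_measure (snd H)"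

definition sint :: "smeasure \<Rightarrow> (real \<Rightarrow> real) \<Rightarrow> real" where
  "sint H h = integral\<^sup>L (fst H) h - integral\<^sup>L (snd H) h"

definition sint2 :: "(real \<Rightarrow> real \<Rightarrow> real) \<Rightarrow> smeasure \<Rightarrow> smeasure \<Rightarrow> real" where
  "sint2 K H1 H2 = sint H2 (\<lambda>s. sint H1 (\<lambda>t. K t s))"

text \<open>An R^m-valued signed measure H is a family of signed measures indexed by 'm.
  Unbiasedness of the estimator int y(t) H(dt) in the model y(t) = theta^T f(t) + eps(t).\<close>
definition unbiased ::
  "real \<Rightarrow> real \<Rightarrow> (real \<Rightarrow> real^'m) \<Rightarrow> ('m \<Rightarrow> smeasure) \<Rightarrow> bool" where
  "unbiased A B f H \<longleftrightarrow> (\<forall>i. fin_smeasure A B (H i)) \<and>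
     (\<forall>\<theta>::real^'m. (\<chi> i. sint (H i) (\<lambda>t. \<theta> \<bullet> f t)) = \<theta>)"

definition covm :: "(real \<Rightarrow> real \<Rightarrow> real) \<Rightarrow> ('m \<Rightarrow> smeasure) \<Rightarrow> real^'m^'m" where
  "covm K H = (\<chi> i j. sint2 K (H i) (H j))"

definition loewner_le :: "real^'m^'m \<Rightarrow> real^'m^'m \<Rightarrow> bool" where
  "loewner_le M N \<longleftrightarrow> (\<forall>v. v \<bullet> ((N - M) *v v) \<ge> 0)"

definition BLUE ::
  "real \<Rightarrow> real \<Rightarrow> (real \<Rightarrow> real^'m) \<Rightarrow> (real \<Rightarrow> real \<Rightarrow> real) \<Rightarrow> ('m \<Rightarrow> smeasure) \<Rightarrow> bool" where
  "BLUE A B f K H \<longleftrightarrow> unbiased A B f H \<and>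
     (\<forall>H'. unbiased A B f H' \<longrightarrow> loewner_le (covm K H) (covm K H'))"

definition cov_kernel :: "real \<Rightarrow> real \<Rightarrow> (real \<Rightarrow> real \<Rightarrow> real) \<Rightarrow> bool" where
  "cov_kernel A B K \<longleftrightarrow> (\<forall>s\<in>{A..B}. \<forall>t\<in>{A..B}. K s t = K t s) \<and>
     (\<forall>n (x::nat \<Rightarrow> real) (c::nat \<Rightarrow> real). (\<forall>i<n. x i \<in> {A..B}) \<longrightarrow>
        (\<Sum>i<n. \<Sum>j<n. c i * c j * K (x i) (x j)) \<ge> 0)"

definition dens_smeasure :: "real measure \<Rightarrow> (real \<Rightarrow> real) \<Rightarrow> smeasure" where
  "dens_smeasure \<nu> h = (density \<nu> (\<lambda>t. ennreal (max 0 (h t))),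
                          density \<nu> (\<lambda>t. ennreal (max 0 (- h t))))"

definition outer :: "real^'m \<Rightarrow> real^'m \<Rightarrow> real^'m^'m" where
  "outer u v = (\<chi> i j. u $ i * v $ j)"

end

theory Submission
  imports Defs
begin

text \<open>
  Write \<open>T h\<close> for the function \<open>s \<mapsto> \<integral> h(t) K(t,s) \<nu>(dt)\<close>. Since \<open>g = \<Sum> q\<^sub>l \<phi>\<^sub>l / \<lambda>\<^sub>l\<close> in
  \<open>L\<^sub>2(\<nu>)\<close> and \<open>T \<phi>\<^sub>l = \<lambda>\<^sub>l \<phi>\<^sub>l\<close>, the partial sums of \<open>f = \<Sum> q\<^sub>l \<phi>\<^sub>l\<close> converge to \<open>T g\<close> uniformly on
  \<open>[A,B]\<close>, so \<open>T g = f\<close>; integrating these partial sums against g gives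
  \<open>C = \<integral> g f\<^sup>T d\<nu>\<close>. C is invertible because \<open>c\<^sup>T C c = \<Sum> (c\<^sup>T q\<^sub>l)\<^sup>2 / \<lambda>\<^sub>l\<close> vanishes only if
  \<open>c\<^sup>T f = 0\<close> on \<open>[A,B]\<close>. Hence \<open>G(dt) = C\<^sup>-\<^sup>1 g(t) \<nu>(dt)\<close> is unbiased and
  \<open>\<integral> K(t,\<cdot>) G(dt) = C\<^sup>-\<^sup>1 f\<close>. For every unbiased H this forces \<open>\<integral>\<integral> K dG dH\<^sup>T = C\<^sup>-\<^sup>1\<close>, so
  the covariance of H exceeds that of G by the covariance of \<open>H - G\<close>, which is positive
  semidefinite because K is.
\<close>

section \<open>Signed measures on an interval\<close>

lemma abs_integral_le_integral:
  fixes u w :: "'a \<Rightarrow> real"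
  assumes "integrable M u" "integrable M w" "\<And>x. x \<in> space M \<Longrightarrow> \<bar>u x\<bar> \<le> w x"
  shows "\<bar>integral\<^sup>L M u\<bar> \<le> integral\<^sup>L M w"
proof -
  have "integral\<^sup>L M (\<lambda>x. \<bar>u x\<bar>) \<le> integral\<^sup>L M w"
    by (rule integral_mono) (use assms in auto)
  then show ?thesis
    using integral_abs_bound[of M u] by linarith
qed

lemma fin_smeasure_D:
  assumes "fin_smeasure A B H"
  shows "space (fst H) = {A..B}" "space (snd H) = {A..B}"
    "finite_measure (fst H)" "finite_measure (snd H)"
    "u \<in> measurable (restrict_space borel {A..B}) N \<Longrightarrow> u \<in> measurable (fst H) N"
    "u \<in> measurable (restrict_space borel {A..B}) N \<Longrightarrow> u \<in> measurable (snd H) N"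
proof -
  have sets: "sets (fst H) = sets (restrict_space borel {A..B})"
    "sets (snd H) = sets (restrict_space borel {A..B})"
    using assms unfolding fin_smeasure_def by auto
  show "space (fst H) = {A..B}" "space (snd H) = {A..B}"
    using sets_eq_imp_space_eq[OF sets(1)] sets_eq_imp_space_eq[OF sets(2)] by auto
  show "finite_measure (fst H)" "finite_measure (snd H)"
    using assms unfolding fin_smeasure_def by auto
  show "u \<in> measurable (restrict_space borel {A..B}) N \<Longrightarrow> u \<in> measurable (fst H) N"
    "u \<in> measurable (restrict_space borel {A..B}) N \<Longrightarrow> u \<in> measurable (snd H) N"
    using measurable_cong_sets[OF sets(1) refl] measurable_cong_sets[OF sets(2) refl] by auto
qed

definition total_mass :: "smeasure \<Rightarrow> real" where
  "total_mass H = measure (fst H) (space (fst H)) + measure (snd H) (space (snd H))"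

lemma total_mass_nonneg: "total_mass H \<ge> 0"
  unfolding total_mass_def by simp

lemma finite_measure_bounded_integral:
  fixes u :: "'a \<Rightarrow> real"
  assumes "finite_measure M" "u \<in> borel_measurable M" "\<And>t. t \<in> space M \<Longrightarrow> \<bar>u t\<bar> \<le> c"
  shows "integrable M u" "\<bar>integral\<^sup>L M u\<bar> \<le> c * measure M (space M)"
proof -
  interpret finite_measure M by fact
  show integrable: "integrable M u"
    by (rule integrable_const_bound[where B = c]) (use assms in auto)
  have "\<bar>integral\<^sup>L M u\<bar> \<le> integral\<^sup>L M (\<lambda>_. c)"
    by (rule abs_integral_le_integral) (use integrable assms in auto)
  then show "\<bar>integral\<^sup>L M u\<bar> \<le> c * measure M (space M)"
    by (simp add: mult.commute)
qed

lemma
  assumes H: "fin_smeasure A B H" and u: "u \<in> borel_measurable (restrict_space borel {A..B})"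
    and bound: "\<And>t. t \<in> {A..B} \<Longrightarrow> \<bar>u t\<bar> \<le> c"
  shows integrable_fst_smeasure: "integrable (fst H) u"
    and integrable_snd_smeasure: "integrable (snd H) u"
    and abs_sint_le: "\<bar>sint H u\<bar> \<le> c * total_mass H"
proof -
  note H = fin_smeasure_D[OF H]
  note P = finite_measure_bounded_integral[OF H(3) H(5)[OF u]]
  note N = finite_measure_bounded_integral[OF H(4) H(6)[OF u]]
  show "integrable (fst H) u" "integrable (snd H) u"
    using P(1) N(1) bound H(1,2) by auto
  show "\<bar>sint H u\<bar> \<le> c * total_mass H"
    using P(2) N(2) bound H(1,2) unfolding sint_def total_mass_def
    by (fastforce simp: algebra_simps)
qed

lemma sint_diff:
  assumes "integrable (fst H) u" "integrable (snd H) u" "integrable (fst H) v" "integrable (snd H) v"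
  shows "sint H (\<lambda>t. u t - v t) = sint H u - sint H v"
  using assms unfolding sint_def by simp

lemma sint_cong:
  assumes "fin_smeasure A B H" "\<And>t. t \<in> {A..B} \<Longrightarrow> u t = v t"
  shows "sint H u = sint H v"
  using fin_smeasure_D(1,2)[OF assms(1)] assms(2) unfolding sint_def
  by (metis Bochner_Integration.integral_cong)

section \<open>Continuous kernels integrated against signed measures\<close>

lemma continuous_kernel_bounded:
  fixes K :: "real \<Rightarrow> real \<Rightarrow> real"
  assumes "continuous_on ({A..B} \<times> {A..B}) (\<lambda>(t, s). K t s)"
  obtains c where "\<And>t s. t \<in> {A..B} \<Longrightarrow> s \<in> {A..B} \<Longrightarrow> \<bar>K t s\<bar> \<le> c"
proof -
  have "compact ((\<lambda>(t, s). K t s) ` ({A..B} \<times> {A..B}))"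
    by (rule compact_continuous_image[OF assms]) (simp add: compact_Times)
  then obtain c where "\<forall>y\<in>(\<lambda>(t, s). K t s) ` ({A..B} \<times> {A..B}). norm y \<le> c"
    using compact_imp_bounded bounded_iff by blast
  then show ?thesis using that by force
qed

lemma continuous_kernel_slice_measurable:
  fixes K :: "real \<Rightarrow> real \<Rightarrow> real"
  assumes "continuous_on ({A..B} \<times> {A..B}) (\<lambda>(t, s). K t s)" "s \<in> {A..B}"
  shows "(\<lambda>t. K t s) \<in> borel_measurable (restrict_space borel {A..B})"
proof -
  have "continuous_on {A..B} ((\<lambda>(t, s). K t s) \<circ> (\<lambda>t. (t, s)))"
    by (intro continuous_on_compose continuous_on_subset[OF assms(1)] continuous_intros)
      (use assms(2) in auto)
  then show ?thesis
    by (simp add: o_def borel_measurable_continuous_on_restrict)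
qed

lemma continuous_kernel_uniformly:
  fixes K :: "real \<Rightarrow> real \<Rightarrow> real"
  assumes "continuous_on ({A..B} \<times> {A..B}) (\<lambda>(t, s). K t s)" "e > 0"
  obtains d where "d > 0" "\<And>t s t' s'. t \<in> {A..B} \<Longrightarrow> s \<in> {A..B} \<Longrightarrow> t' \<in> {A..B} \<Longrightarrow> s' \<in> {A..B}
     \<Longrightarrow> \<bar>t - t'\<bar> < d \<Longrightarrow> \<bar>s - s'\<bar> < d \<Longrightarrow> \<bar>K t s - K t' s'\<bar> < e"
proof -
  have "uniformly_continuous_on ({A..B} \<times> {A..B}) (\<lambda>(t, s). K t s)"
    by (rule compact_uniformly_continuous[OF assms(1)]) (simp add: compact_Times)
  then obtain d where d: "d > 0" and close:
    "\<forall>x\<in>{A..B} \<times> {A..B}. \<forall>x'\<in>{A..B} \<times> {A..B}. dist x' x < d \<longrightarrow>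
        dist ((\<lambda>(t, s). K t s) x') ((\<lambda>(t, s). K t s) x) < e"
    unfolding uniformly_continuous_on_def using assms(2) by metis
  show ?thesis
  proof (rule that[of "d / 2"])
    fix t s t' s' assume ts: "t \<in> {A..B}" "s \<in> {A..B}" "t' \<in> {A..B}" "s' \<in> {A..B}"
      "\<bar>t - t'\<bar> < d / 2" "\<bar>s - s'\<bar> < d / 2"
    have "dist (t, s) (t', s') \<le> dist t t' + dist s s'"
      unfolding dist_Pair_Pair using sqrt_sum_squares_le_sum_abs[of "dist t t'" "dist s s'"] by simp
    also have "\<dots> < d" using ts by (simp add: dist_real_def)
    finally show "\<bar>K t s - K t' s'\<bar> < e" using close ts by (force simp: dist_real_def)
  qed (use d in simp)
qed

lemma continuous_on_sint_kernel:
  fixes K :: "real \<Rightarrow> real \<Rightarrow> real"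
  assumes H: "fin_smeasure A B H" and K: "continuous_on ({A..B} \<times> {A..B}) (\<lambda>(t, s). K t s)"
  shows "continuous_on {A..B} (\<lambda>s. sint H (\<lambda>t. K t s))"
  unfolding continuous_on_iff
proof (intro ballI allI impI)
  fix s0 and e :: real assume s0: "s0 \<in> {A..B}" and e: "e > 0"
  define c where "c = e / (2 * (total_mass H + 1))"
  have T: "total_mass H \<ge> 0" by (rule total_mass_nonneg)
  then have c0: "c > 0" unfolding c_def using e by simp
  have "e * total_mass H < e * (2 * (total_mass H + 1))" using e T by (intro mult_strict_left_mono) auto
  then have cT: "c * total_mass H < e" unfolding c_def using T by (simp add: pos_divide_less_eq)
  obtain d where d: "d > 0" and close: "\<And>t s t' s'. t \<in> {A..B} \<Longrightarrow> s \<in> {A..B} \<Longrightarrow> t' \<in> {A..B}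
     \<Longrightarrow> s' \<in> {A..B} \<Longrightarrow> \<bar>t - t'\<bar> < d \<Longrightarrow> \<bar>s - s'\<bar> < d \<Longrightarrow> \<bar>K t s - K t' s'\<bar> < c"
    using continuous_kernel_uniformly[OF K c0] by blast
  obtain M where M: "\<And>t s. t \<in> {A..B} \<Longrightarrow> s \<in> {A..B} \<Longrightarrow> \<bar>K t s\<bar> \<le> M"
    using continuous_kernel_bounded[OF K] by blast
  show "\<exists>d>0. \<forall>s\<in>{A..B}. dist s s0 < d \<longrightarrow> dist (sint H (\<lambda>t. K t s)) (sint H (\<lambda>t. K t s0)) < e"
  proof (intro exI[of _ d] conjI ballI impI d)
    fix s assume s: "s \<in> {A..B}" and "dist s s0 < d"
    then have "\<bar>K t s - K t s0\<bar> \<le> c" if "t \<in> {A..B}" for t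
      using close[OF that s that s0] d by (simp add: dist_real_def less_imp_le)
    then have "\<bar>sint H (\<lambda>t. K t s - K t s0)\<bar> \<le> c * total_mass H"
      by (intro abs_sint_le[OF H] borel_measurable_diff continuous_kernel_slice_measurable[OF K] s s0)
    moreover have "sint H (\<lambda>t. K t s - K t s0) = sint H (\<lambda>t. K t s) - sint H (\<lambda>t. K t s0)"
      using integrable_fst_smeasure[OF H continuous_kernel_slice_measurable[OF K], of _ M]
        integrable_snd_smeasure[OF H continuous_kernel_slice_measurable[OF K], of _ M] M s s0
      by (intro sint_diff) auto
    ultimately show "dist (sint H (\<lambda>t. K t s)) (sint H (\<lambda>t. K t s0)) < e"
      using cT by (simp add: dist_real_def)
  qed
qed

lemma interval_grid:
  fixes A B d :: real
  assumes AB: "A < B" and d: "d > 0"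
  obtains N :: nat and x :: "nat \<Rightarrow> real" and cell :: "real \<Rightarrow> nat"
  where "\<And>a. a < N \<Longrightarrow> x a \<in> {A..B}"
    "\<And>t. t \<in> {A..B} \<Longrightarrow> cell t < N" "\<And>t. t \<in> {A..B} \<Longrightarrow> \<bar>t - x (cell t)\<bar> < d"
    "cell \<in> measurable (restrict_space borel {A..B}) (count_space UNIV)"
proof -
  define N :: nat where "N = nat \<lceil>(B - A) / d\<rceil> + 1"
  have N0: "N > 0" unfolding N_def by simp
  have "(B - A) / d < real N" unfolding N_def by linarith
  then have hN: "B - A < real N * d" using d by (simp add: field_simps)
  define h where "h = (B - A) / N"
  have h0: "h > 0" unfolding h_def using AB N0 by simp
  have hd: "h < d" unfolding h_def using hN N0 by (simp add: field_simps)
  have Nh: "A + real N * h = B" unfolding h_def using N0 by simp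
  define x where "x a = A + real a * h" for a :: nat
  define cell where "cell t = min (N - 1) (nat \<lfloor>(t - A) / h\<rfloor>)" for t
  show ?thesis
  proof (rule that[of N x cell])
    fix a assume "a < N"
    then have "real a * h \<le> real N * h" using h0 by simp
    moreover have "0 \<le> real a * h" using h0 by simp
    ultimately show "x a \<in> {A..B}" unfolding x_def using Nh by simp
  next
    fix t assume t: "t \<in> {A..B}"
    show "cell t < N" unfolding cell_def using N0 by simp
    define k where "k = nat \<lfloor>(t - A) / h\<rfloor>"
    have "(t - A) / h \<ge> 0" using t h0 by simp
    then have "real k \<le> (t - A) / h" "(t - A) / h < real k + 1"
      unfolding k_def by linarith+
    then have k: "x k \<le> t" "t < x k + h" using h0 unfolding x_def by (simp_all add: field_simps)
    show "\<bar>t - x (cell t)\<bar> < d"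
    proof (cases "k \<le> N - 1")
      case True
      then have "cell t = k" unfolding cell_def k_def by simp
      then show ?thesis using k hd by simp
    next
      case False
      then have "real N * h \<le> real k * h" using h0 by simp
      then have "x k \<ge> B" unfolding x_def using Nh by simp
      then have "t = B" using k t by simp
      moreover have "cell t = N - 1" unfolding cell_def using False k_def by simp
      then have "x (cell t) = B - h" unfolding x_def using Nh N0 by (simp add: of_nat_diff algebra_simps)
      ultimately show ?thesis using h0 hd by simp
    qed
  next
    have "cell \<in> measurable borel (count_space UNIV)" unfolding cell_def by measurable
    then show "cell \<in> measurable (restrict_space borel {A..B}) (count_space UNIV)"
      by (rule measurable_restrict_space1)
  qed
qed

lemma integral_step_function:
  fixes v :: "nat \<Rightarrow> real"
  assumes "finite_measure M" and cell: "cell \<in> measurable M (count_space UNIV)"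
    and lt: "\<And>t. t \<in> space M \<Longrightarrow> cell t < N"
  shows "integrable M (\<lambda>t. v (cell t))"
    "integral\<^sup>L M (\<lambda>t. v (cell t)) = (\<Sum>a<N. v a * measure M {t\<in>space M. cell t = a})"
proof -
  interpret finite_measure M by fact
  define S where "S a = {t\<in>space M. cell t = a}" for a
  have S_sets: "S a \<in> sets M" for a
    using measurable_sets[OF cell, of "{a}"] by (simp add: S_def vimage_def Int_def conj_commute)
  then have int: "integrable M (\<lambda>t. v a * indicator (S a) t)" for a
    by (simp add: emeasure_finite less_top[symmetric])
  have step: "v (cell t) = (\<Sum>a<N. v a * indicator (S a) t)" if "t \<in> space M" for t
  proof -
    have "(\<Sum>a<N. v a * indicator (S a) t) = (\<Sum>a\<in>{cell t}. v a * indicator (S a) t)"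
      by (rule sum.mono_neutral_right) (use that lt in \<open>auto simp: S_def indicator_def\<close>)
    then show ?thesis using that by (simp add: S_def indicator_def)
  qed
  show "integrable M (\<lambda>t. v (cell t))"
    by (rule Bochner_Integration.integrable_cong[THEN iffD2, OF refl step Bochner_Integration.integrable_sum])
      (use int in auto)
  have "integral\<^sup>L M (\<lambda>t. v (cell t)) = integral\<^sup>L M (\<lambda>t. \<Sum>a<N. v a * indicator (S a) t)"
    by (rule Bochner_Integration.integral_cong[OF refl step])
  also have "\<dots> = (\<Sum>a<N. v a * measure M (S a))"
    using int S_sets
    by (subst Bochner_Integration.integral_sum) (auto simp: Int_absorb2)
  finally show "integral\<^sup>L M (\<lambda>t. v (cell t)) = (\<Sum>a<N. v a * measure M {t\<in>space M. cell t = a})"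
    by (simp add: S_def)
qed

definition signed_measure :: "smeasure \<Rightarrow> real set \<Rightarrow> real" where
  "signed_measure H S = measure (fst H) S - measure (snd H) S"

lemma sint_step_function:
  fixes v :: "nat \<Rightarrow> real"
  assumes H: "fin_smeasure A B H"
    and cell: "cell \<in> measurable (restrict_space borel {A..B}) (count_space UNIV)"
    and lt: "\<And>t. t \<in> {A..B} \<Longrightarrow> cell t < N"
  shows "integrable (fst H) (\<lambda>t. v (cell t))" "integrable (snd H) (\<lambda>t. v (cell t))"
    "sint H (\<lambda>t. v (cell t)) = (\<Sum>a<N. v a * signed_measure H {t\<in>{A..B}. cell t = a})"
proof -
  note H = fin_smeasure_D[OF H]
  note P = integral_step_function[OF H(3) H(5)[OF cell] lt[folded H(1)], of v]
    and N = integral_step_function[OF H(4) H(6)[OF cell] lt[folded H(2)], of v]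
  show "integrable (fst H) (\<lambda>t. v (cell t))" "integrable (snd H) (\<lambda>t. v (cell t))"
    using P(1) N(1) by auto
  show "sint H (\<lambda>t. v (cell t)) = (\<Sum>a<N. v a * signed_measure H {t\<in>{A..B}. cell t = a})"
    using P(2) N(2) H(1,2)
    by (simp add: sint_def signed_measure_def sum_subtractf right_diff_distrib)
qed

lemma sint2_step_kernel_approx:
  fixes K :: "real \<Rightarrow> real \<Rightarrow> real" and x :: "nat \<Rightarrow> real"
  assumes H1: "fin_smeasure A B H1" and H2: "fin_smeasure A B H2"
    and K: "continuous_on ({A..B} \<times> {A..B}) (\<lambda>(t, s). K t s)"
    and cell: "cell \<in> measurable (restrict_space borel {A..B}) (count_space UNIV)"
    and lt: "\<And>t. t \<in> {A..B} \<Longrightarrow> cell t < N"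
    and close: "\<And>t s. t \<in> {A..B} \<Longrightarrow> s \<in> {A..B} \<Longrightarrow> \<bar>K t s - K (x (cell t)) (x (cell s))\<bar> \<le> \<epsilon>"
  defines "w H a \<equiv> signed_measure H {t\<in>{A..B}. cell t = a}"
  shows "\<bar>sint2 K H1 H2 - (\<Sum>a<N. \<Sum>b<N. K (x a) (x b) * w H1 a * w H2 b)\<bar>
          \<le> \<epsilon> * total_mass H1 * total_mass H2"
proof -
  obtain c where c: "\<And>t s. t \<in> {A..B} \<Longrightarrow> s \<in> {A..B} \<Longrightarrow> \<bar>K t s\<bar> \<le> c"
    using continuous_kernel_bounded[OF K] by blast
  note Kmeas = continuous_kernel_slice_measurable[OF K]
  define F where "F s = sint H1 (\<lambda>t. K t s)" for s
  define \<psi> where "\<psi> b = (\<Sum>a<N. K (x a) (x b) * w H1 a)" for b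
  note step1 = sint_step_function[OF H1 cell lt] and step2 = sint_step_function[OF H2 cell lt]
  have F_close: "\<bar>F s - \<psi> (cell s)\<bar> \<le> \<epsilon> * total_mass H1" if s: "s \<in> {A..B}" for s
  proof -
    have step: "sint H1 (\<lambda>t. K (x (cell t)) (x (cell s))) = \<psi> (cell s)"
      unfolding \<psi>_def w_def by (rule step1(3))
    have "F s - \<psi> (cell s) = sint H1 (\<lambda>t. K t s - K (x (cell t)) (x (cell s)))"
      unfolding F_def step[symmetric]
      by (intro sint_diff[symmetric] integrable_fst_smeasure[OF H1 Kmeas[OF s] c]
          integrable_snd_smeasure[OF H1 Kmeas[OF s] c] step1(1,2) s)
    also have "\<bar>\<dots>\<bar> \<le> \<epsilon> * total_mass H1"
      by (intro abs_sint_le[OF H1] borel_measurable_diff Kmeas s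
          measurable_compose[OF cell borel_measurable_count_space] close)
    finally show ?thesis .
  qed
  have F_meas: "F \<in> borel_measurable (restrict_space borel {A..B})"
    unfolding F_def by (rule borel_measurable_continuous_on_restrict[OF continuous_on_sint_kernel[OF H1 K]])
  have F_bound: "\<bar>F s\<bar> \<le> c * total_mass H1" if "s \<in> {A..B}" for s
    unfolding F_def by (rule abs_sint_le[OF H1 Kmeas[OF that]]) (use c that in auto)
  have "sint2 K H1 H2 - sint H2 (\<lambda>s. \<psi> (cell s)) = sint H2 (\<lambda>s. F s - \<psi> (cell s))"
    unfolding sint2_def F_def[symmetric]
    by (rule sint_diff[symmetric]) (use integrable_fst_smeasure[OF H2 F_meas F_bound]
        integrable_snd_smeasure[OF H2 F_meas F_bound] step2(1,2) in auto)
  also have "\<bar>\<dots>\<bar> \<le> (\<epsilon> * total_mass H1) * total_mass H2"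
    by (intro abs_sint_le[OF H2] borel_measurable_diff F_meas F_close
        measurable_compose[OF cell borel_measurable_count_space])
  also have "sint H2 (\<lambda>s. \<psi> (cell s)) = (\<Sum>b<N. \<psi> b * w H2 b)"
    unfolding w_def by (rule step2(3))
  also have "\<dots> = (\<Sum>a<N. \<Sum>b<N. K (x a) (x b) * w H1 a * w H2 b)"
    unfolding \<psi>_def sum_distrib_right by (rule sum.swap)
  finally show ?thesis .
qed

text \<open>Replacing K by its values on a fine grid turns \<open>sint2\<close> into a finite bilinear form
  in the masses of the grid cells; this is how symmetry and positive semidefiniteness of K pass
  to signed measures.\<close>

lemma sint2_grid_approx:
  fixes K :: "real \<Rightarrow> real \<Rightarrow> real"
  assumes AB: "A < B" and K: "continuous_on ({A..B} \<times> {A..B}) (\<lambda>(t, s). K t s)" and "\<epsilon> > 0"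
  obtains N :: nat and x :: "nat \<Rightarrow> real" and w :: "smeasure \<Rightarrow> nat \<Rightarrow> real"
  where "\<And>a. a < N \<Longrightarrow> x a \<in> {A..B}"
    "\<And>H1 H2. fin_smeasure A B H1 \<Longrightarrow> fin_smeasure A B H2 \<Longrightarrow>
       \<bar>sint2 K H1 H2 - (\<Sum>a<N. \<Sum>b<N. K (x a) (x b) * w H1 a * w H2 b)\<bar>
         \<le> \<epsilon> * total_mass H1 * total_mass H2"
proof -
  obtain d where "d > 0" and close: "\<And>t s t' s'. t \<in> {A..B} \<Longrightarrow> s \<in> {A..B} \<Longrightarrow> t' \<in> {A..B}
     \<Longrightarrow> s' \<in> {A..B} \<Longrightarrow> \<bar>t - t'\<bar> < d \<Longrightarrow> \<bar>s - s'\<bar> < d \<Longrightarrow> \<bar>K t s - K t' s'\<bar> < \<epsilon>"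
    using continuous_kernel_uniformly[OF K \<open>\<epsilon> > 0\<close>] by blast
  show ?thesis
  proof (rule interval_grid[OF AB \<open>d > 0\<close>])
    fix N :: nat and x :: "nat \<Rightarrow> real" and cell :: "real \<Rightarrow> nat"
    assume x: "\<And>a. a < N \<Longrightarrow> x a \<in> {A..B}"
      and lt: "\<And>t. t \<in> {A..B} \<Longrightarrow> cell t < N" and near: "\<And>t. t \<in> {A..B} \<Longrightarrow> \<bar>t - x (cell t)\<bar> < d"
      and cell: "cell \<in> measurable (restrict_space borel {A..B}) (count_space UNIV)"
    have close_cell: "\<bar>K t s - K (x (cell t)) (x (cell s))\<bar> \<le> \<epsilon>"
      if "t \<in> {A..B}" "s \<in> {A..B}" for t s
      using close[OF that x[OF lt] x[OF lt] near near] that by simp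
    show ?thesis
    proof (rule that[OF x, where w = "\<lambda>H a. signed_measure H {t\<in>{A..B}. cell t = a}"])
      fix H1 H2 assume "fin_smeasure A B H1" "fin_smeasure A B H2"
      then show "\<bar>sint2 K H1 H2 - (\<Sum>a<N. \<Sum>b<N. K (x a) (x b) * signed_measure H1 {t\<in>{A..B}. cell t = a}
          * signed_measure H2 {t\<in>{A..B}. cell t = b})\<bar> \<le> \<epsilon> * total_mass H1 * total_mass H2"
        by (rule sint2_step_kernel_approx[OF _ _ K cell lt close_cell])
    qed
  qed
qed

lemma sint2_symmetric:
  fixes K :: "real \<Rightarrow> real \<Rightarrow> real"
  assumes AB: "A < B" and K: "continuous_on ({A..B} \<times> {A..B}) (\<lambda>(t, s). K t s)"
    and K_sym: "\<And>s t. s \<in> {A..B} \<Longrightarrow> t \<in> {A..B} \<Longrightarrow> K s t = K t s"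
    and H1: "fin_smeasure A B H1" and H2: "fin_smeasure A B H2"
  shows "sint2 K H1 H2 = sint2 K H2 H1"
proof -
  define T where "T = 2 * total_mass H1 * total_mass H2 + 1"
  have T: "T > 0"
    unfolding T_def using mult_nonneg_nonneg[OF total_mass_nonneg total_mass_nonneg, of H1 H2] by simp
  have "\<bar>sint2 K H1 H2 - sint2 K H2 H1\<bar> \<le> e" if "e > 0" for e
  proof (rule sint2_grid_approx[OF AB K divide_pos_pos[OF that T]])
    fix N x w assume x: "\<And>a. a < N \<Longrightarrow> x a \<in> {A..B}"
      and approx: "\<And>H1 H2. fin_smeasure A B H1 \<Longrightarrow> fin_smeasure A B H2 \<Longrightarrow>
       \<bar>sint2 K H1 H2 - (\<Sum>a<N. \<Sum>b<N. K (x a) (x b) * w H1 a * w H2 b)\<bar>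
         \<le> e / T * total_mass H1 * total_mass H2"
    have "(\<Sum>a<N. \<Sum>b<N. K (x a) (x b) * w H1 a * w H2 b) = (\<Sum>a<N. \<Sum>b<N. K (x a) (x b) * w H2 a * w H1 b)"
      by (subst sum.swap) (use K_sym x in \<open>auto intro!: sum.cong simp: mult_ac\<close>)
    then have "\<bar>sint2 K H1 H2 - sint2 K H2 H1\<bar> \<le> e / T * total_mass H1 * total_mass H2 + e / T * total_mass H2 * total_mass H1"
      using approx[OF H1 H2] approx[OF H2 H1] by linarith
    also have "\<dots> = e / T * (2 * total_mass H1 * total_mass H2)" by (simp add: algebra_simps)
    also have "\<dots> \<le> e" using that T unfolding T_def by (simp add: field_simps)
    finally show ?thesis .
  qed
  then show ?thesis by (metis abs_le_zero_iff eq_iff_diff_eq_0 field_le_epsilon add_0)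
qed

lemma bilinear_form_sum_combination:
  fixes K :: "nat \<Rightarrow> nat \<Rightarrow> real" and v :: "'i \<Rightarrow> real"
  shows "(\<Sum>i\<in>I. \<Sum>j\<in>I. v i * v j * (\<Sum>a<N. \<Sum>b<N. K a b * w i a * w j b))
    = (\<Sum>a<N. \<Sum>b<N. K a b * (\<Sum>i\<in>I. v i * w i a) * (\<Sum>j\<in>I. v j * w j b))"
proof -
  have "K a b * (\<Sum>i\<in>I. v i * w i a) * (\<Sum>j\<in>I. v j * w j b)
      = (\<Sum>i\<in>I. \<Sum>j\<in>I. v i * v j * (K a b * w i a * w j b))" for a b
    by (simp add: sum_product sum_distrib_left mult_ac)
  then have "(\<Sum>a<N. \<Sum>b<N. K a b * (\<Sum>i\<in>I. v i * w i a) * (\<Sum>j\<in>I. v j * w j b))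
      = (\<Sum>a<N. \<Sum>b<N. \<Sum>i\<in>I. \<Sum>j\<in>I. v i * v j * (K a b * w i a * w j b))"
    by simp
  also have "\<dots> = (\<Sum>a<N. \<Sum>i\<in>I. \<Sum>b<N. \<Sum>j\<in>I. v i * v j * (K a b * w i a * w j b))"
    by (rule sum.cong[OF refl], rule sum.swap)
  also have "\<dots> = (\<Sum>i\<in>I. \<Sum>a<N. \<Sum>j\<in>I. \<Sum>b<N. v i * v j * (K a b * w i a * w j b))"
    by (subst sum.swap) (rule sum.cong[OF refl], rule sum.cong[OF refl], rule sum.swap)
  also have "\<dots> = (\<Sum>i\<in>I. \<Sum>j\<in>I. \<Sum>a<N. \<Sum>b<N. v i * v j * (K a b * w i a * w j b))"
    by (rule sum.cong[OF refl], rule sum.swap)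
  also have "\<dots> = (\<Sum>i\<in>I. \<Sum>j\<in>I. v i * v j * (\<Sum>a<N. \<Sum>b<N. K a b * w i a * w j b))"
    by (simp only: sum_distrib_left)
  finally show ?thesis ..
qed

lemma sint2_quadratic_form_nonneg:
  fixes K :: "real \<Rightarrow> real \<Rightarrow> real" and H :: "'i \<Rightarrow> smeasure" and v :: "'i \<Rightarrow> real"
  assumes AB: "A < B" and K: "continuous_on ({A..B} \<times> {A..B}) (\<lambda>(t, s). K t s)"
    and K_cov: "cov_kernel A B K" and H: "\<And>i. i \<in> I \<Longrightarrow> fin_smeasure A B (H i)"
  shows "(\<Sum>i\<in>I. \<Sum>j\<in>I. v i * v j * sint2 K (H i) (H j)) \<ge> 0" (is "?Q \<ge> 0")
proof -
  define m where "m i = \<bar>v i\<bar> * total_mass (H i)" for i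
  define T where "T = (\<Sum>i\<in>I. m i)\<^sup>2 + 1"
  have T: "T > 0" unfolding T_def by (simp add: add_nonneg_pos)
  have "0 \<le> ?Q + e" if e: "e > 0" for e
  proof (rule sint2_grid_approx[OF AB K divide_pos_pos[OF e T]])
    fix N :: nat and x :: "nat \<Rightarrow> real" and w :: "smeasure \<Rightarrow> nat \<Rightarrow> real"
    assume x: "\<And>a. a < N \<Longrightarrow> x a \<in> {A..B}"
      and approx: "\<And>H1 H2. fin_smeasure A B H1 \<Longrightarrow> fin_smeasure A B H2 \<Longrightarrow>
       \<bar>sint2 K H1 H2 - (\<Sum>a<N. \<Sum>b<N. K (x a) (x b) * w H1 a * w H2 b)\<bar>
         \<le> e / T * total_mass H1 * total_mass H2"
    define G where "G i j = (\<Sum>a<N. \<Sum>b<N. K (x a) (x b) * w (H i) a * w (H j) b)" for i j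
    define c where "c a = (\<Sum>i\<in>I. v i * w (H i) a)" for a
    have "(\<Sum>i\<in>I. \<Sum>j\<in>I. v i * v j * G i j) = (\<Sum>a<N. \<Sum>b<N. K (x a) (x b) * c a * c b)"
      unfolding G_def c_def by (rule bilinear_form_sum_combination)
    also have "\<dots> \<ge> 0"
      using K_cov x unfolding cov_kernel_def by (auto simp: mult_ac)
    finally have G_nonneg: "(\<Sum>i\<in>I. \<Sum>j\<in>I. v i * v j * G i j) \<ge> 0" .
    have "\<bar>?Q - (\<Sum>i\<in>I. \<Sum>j\<in>I. v i * v j * G i j)\<bar>
        = \<bar>\<Sum>i\<in>I. \<Sum>j\<in>I. v i * v j * (sint2 K (H i) (H j) - G i j)\<bar>"
      by (simp add: sum_subtractf right_diff_distrib)
    also have "\<dots> \<le> (\<Sum>i\<in>I. \<Sum>j\<in>I. \<bar>v i * v j * (sint2 K (H i) (H j) - G i j)\<bar>)"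
      by (rule order_trans[OF sum_abs sum_mono[OF sum_abs]])
    also have "\<dots> \<le> (\<Sum>i\<in>I. \<Sum>j\<in>I. e / T * (m i * m j))"
    proof (intro sum_mono)
      fix i j assume "i \<in> I" "j \<in> I"
      then have "\<bar>v i * v j\<bar> * \<bar>sint2 K (H i) (H j) - G i j\<bar>
          \<le> \<bar>v i * v j\<bar> * (e / T * total_mass (H i) * total_mass (H j))"
        unfolding G_def by (intro mult_left_mono approx H) auto
      then show "\<bar>v i * v j * (sint2 K (H i) (H j) - G i j)\<bar> \<le> e / T * (m i * m j)"
        by (simp add: m_def abs_mult mult_ac)
    qed
    also have "\<dots> = e / T * (\<Sum>i\<in>I. m i)\<^sup>2"
      unfolding power2_eq_square sum_product by (simp add: sum_distrib_left)
    also have "\<dots> \<le> e"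
      using e T unfolding T_def by (simp add: field_simps)
    finally show ?thesis using G_nonneg by linarith
  qed
  then show ?thesis by (rule field_le_epsilon)
qed

lemma sint2_quadratic_form_difference_nonneg:
  fixes K :: "real \<Rightarrow> real \<Rightarrow> real" and H G :: "'i::finite \<Rightarrow> smeasure" and v :: "'i \<Rightarrow> real"
  assumes AB: "A < B" and K: "continuous_on ({A..B} \<times> {A..B}) (\<lambda>(t, s). K t s)"
    and K_cov: "cov_kernel A B K" and H: "\<And>i. fin_smeasure A B (H i)" and G: "\<And>i. fin_smeasure A B (G i)"
  shows "0 \<le> (\<Sum>i\<in>UNIV. \<Sum>j\<in>UNIV. v i * v j * (sint2 K (H i) (H j) - sint2 K (H i) (G j)
      - sint2 K (G i) (H j) + sint2 K (G i) (G j)))"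
proof -
  have split: "(\<Sum>p\<in>UNIV. h p) = (\<Sum>i\<in>UNIV. h (Inl i)) + (\<Sum>i\<in>UNIV. h (Inr i))"
    for h :: "'i + 'i \<Rightarrow> real"
    using sum.Plus[of UNIV UNIV h] by (simp add: comp_def)
  \<comment> \<open>the families H and G with weights v and -v encode the signed measures H - G\<close>
  define X where "X = case_sum H G"
  define w where "w = case_sum v (\<lambda>i. - v i)"
  have "0 \<le> (\<Sum>p\<in>UNIV. \<Sum>q\<in>UNIV. w p * w q * sint2 K (X p) (X q))"
    by (rule sint2_quadratic_form_nonneg[OF AB K K_cov]) (auto simp: X_def H G split: sum.split)
  then show ?thesis
    by (simp add: split X_def w_def sum.distrib[symmetric] sum_subtractf[symmetric] algebra_simps)
qed

section \<open>Best linear unbiased estimators\<close>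

lemma inner_matrix_vector_mult_sum:
  fixes X :: "real^'m::finite^'m" and v :: "real^'m"
  shows "v \<bullet> (X *v v) = (\<Sum>i\<in>UNIV. \<Sum>j\<in>UNIV. v $ i * v $ j * X $ i $ j)"
  unfolding inner_vec_def matrix_vector_mult_def by (simp add: sum_distrib_left mult_ac)

lemma sint2_unbiased:
  fixes K :: "real \<Rightarrow> real \<Rightarrow> real" and G H :: "'m::finite \<Rightarrow> smeasure" and M :: "real^'m^'m"
  assumes H: "unbiased A B f H"
    and KG: "\<And>i s. s \<in> {A..B} \<Longrightarrow> sint (G i) (\<lambda>t. K t s) = M $ i \<bullet> f s"
  shows "sint2 K (G i) (H j) = M $ i $ j"
proof -
  have "sint2 K (G i) (H j) = sint (H j) (\<lambda>s. M $ i \<bullet> f s)"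
    unfolding sint2_def using H KG unfolding unbiased_def by (blast intro: sint_cong)
  also have "\<dots> = M $ i $ j"
    using H unfolding unbiased_def by (metis vec_lambda_beta)
  finally show ?thesis .
qed

lemma BLUE_if_kernel_transform:
  fixes K :: "real \<Rightarrow> real \<Rightarrow> real" and G :: "'m::finite \<Rightarrow> smeasure" and M :: "real^'m^'m"
  assumes AB: "A < B" and K: "continuous_on ({A..B} \<times> {A..B}) (\<lambda>(t, s). K t s)"
    and K_cov: "cov_kernel A B K" and G: "unbiased A B f G"
    and KG: "\<And>i s. s \<in> {A..B} \<Longrightarrow> sint (G i) (\<lambda>t. K t s) = M $ i \<bullet> f s"
  shows "BLUE A B f K G" "covm K G = M"
proof -
  show cov: "covm K G = M"
    unfolding covm_def using sint2_unbiased[OF G KG] by (simp add: vec_eq_iff)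
  have "loewner_le M (covm K H)" if H: "unbiased A B f H" for H
    unfolding loewner_le_def
  proof
    fix v :: "real^'m"
    have fin: "fin_smeasure A B (H i)" "fin_smeasure A B (G i)" for i
      using G H unfolding unbiased_def by blast+
    have GH: "sint2 K (G i) (H j) = M $ i $ j" for i j by (rule sint2_unbiased[OF H KG])
    have GG: "sint2 K (G i) (G j) = M $ i $ j" for i j by (rule sint2_unbiased[OF G KG])
    have HG: "sint2 K (H i) (G j) = M $ j $ i" for i j
      using sint2_symmetric[OF AB K _ fin(1) fin(2)] GH K_cov unfolding cov_kernel_def by metis
    have "0 \<le> (\<Sum>i\<in>UNIV. \<Sum>j\<in>UNIV. v $ i * v $ j * (sint2 K (H i) (H j) - sint2 K (H i) (G j)
        - sint2 K (G i) (H j) + sint2 K (G i) (G j)))"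
      by (rule sint2_quadratic_form_difference_nonneg[OF AB K K_cov fin])
    also have "\<dots> = (\<Sum>i\<in>UNIV. \<Sum>j\<in>UNIV. v $ i * v $ j * (sint2 K (H i) (H j) - M $ j $ i))"
      by (simp add: HG GH GG)
    also have "\<dots> = (\<Sum>i\<in>UNIV. \<Sum>j\<in>UNIV. v $ i * v $ j * (sint2 K (H i) (H j) - M $ i $ j))"
    proof -
      have "(\<Sum>i\<in>UNIV. \<Sum>j\<in>UNIV. v $ i * v $ j * M $ j $ i) = (\<Sum>i\<in>UNIV. \<Sum>j\<in>UNIV. v $ i * v $ j * M $ i $ j)"
        by (subst sum.swap) (simp add: mult_ac)
      then show ?thesis by (simp add: right_diff_distrib sum_subtractf)
    qed
    also have "\<dots> = v \<bullet> ((covm K H - M) *v v)"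
      unfolding inner_matrix_vector_mult_sum covm_def by simp
    finally show "v \<bullet> ((covm K H - M) *v v) \<ge> 0" .
  qed
  then show "BLUE A B f K G"
    unfolding BLUE_def cov using G by blast
qed

section \<open>Square-integrable functions\<close>

definition square_integrable :: "'a measure \<Rightarrow> ('a \<Rightarrow> real) \<Rightarrow> bool" where
  "square_integrable M u \<longleftrightarrow> u \<in> borel_measurable M \<and> integrable M (\<lambda>x. (u x)\<^sup>2)"

lemma square_integrable_mult_integrable:
  assumes "square_integrable M u" "square_integrable M w"
  shows "integrable M (\<lambda>x. u x * w x)"
proof (rule Bochner_Integration.integrable_bound)
  show "integrable M (\<lambda>x. ((u x)\<^sup>2 + (w x)\<^sup>2) / 2)"
    using assms unfolding square_integrable_def by auto
  show "(\<lambda>x. u x * w x) \<in> borel_measurable M"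
    using assms unfolding square_integrable_def by auto
  have "\<bar>u x\<bar> * \<bar>w x\<bar> \<le> ((u x)\<^sup>2 + (w x)\<^sup>2) / 2" for x
    using sum_squares_bound[of "\<bar>u x\<bar>" "\<bar>w x\<bar>"] by (simp add: power2_eq_square)
  then show "AE x in M. norm (u x * w x) \<le> norm (((u x)\<^sup>2 + (w x)\<^sup>2) / 2)"
    by (simp add: abs_mult)
qed

lemma square_integrable_add:
  assumes "square_integrable M u" "square_integrable M w"
  shows "square_integrable M (\<lambda>x. u x + w x)"
proof -
  have "integrable M (\<lambda>x. (u x)\<^sup>2 + (w x)\<^sup>2 + 2 * (u x * w x))"
    using assms square_integrable_mult_integrable[OF assms] unfolding square_integrable_def by auto
  moreover have "(\<lambda>x. u x + w x) \<in> borel_measurable M"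
    using assms unfolding square_integrable_def by auto
  ultimately show ?thesis
    unfolding square_integrable_def by (simp add: power2_sum mult.assoc)
qed

lemma square_integrable_cmult:
  "square_integrable M u \<Longrightarrow> square_integrable M (\<lambda>x. c * u x)"
  unfolding square_integrable_def by (auto simp: power_mult_distrib)

lemma square_integrable_diff:
  assumes "square_integrable M u" "square_integrable M w"
  shows "square_integrable M (\<lambda>x. u x - w x)"
  using square_integrable_add[OF assms(1) square_integrable_cmult[OF assms(2), of "-1"]] by simp

lemma square_integrable_sum:
  "finite I \<Longrightarrow> (\<And>i. i \<in> I \<Longrightarrow> square_integrable M (u i)) \<Longrightarrow>
    square_integrable M (\<lambda>x. \<Sum>i\<in>I. u i x)"
proof (induction I rule: finite_induct)
  case empty
  then show ?case unfolding square_integrable_def by simp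
next
  case (insert i I)
  then show ?case using square_integrable_add[of M "u i" "\<lambda>x. \<Sum>i\<in>I. u i x"] by simp
qed

lemma square_integrable_dominated:
  fixes u w :: "'a \<Rightarrow> real"
  assumes "square_integrable M u" "w \<in> borel_measurable M" "\<And>x. x \<in> space M \<Longrightarrow> \<bar>w x\<bar> \<le> \<bar>u x\<bar>"
  shows "square_integrable M w"
proof -
  have "integrable M (\<lambda>x. (w x)\<^sup>2)"
  proof (rule Bochner_Integration.integrable_bound)
    show "integrable M (\<lambda>x. (u x)\<^sup>2)" using assms(1) unfolding square_integrable_def by blast
    show "(\<lambda>x. (w x)\<^sup>2) \<in> borel_measurable M" using assms(2) by measurable
    show "AE x in M. norm ((w x)\<^sup>2) \<le> norm ((u x)\<^sup>2)"
      using assms(3) by (auto intro!: AE_I2 simp: abs_le_square_iff)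
  qed
  then show ?thesis using assms(2) unfolding square_integrable_def by blast
qed

lemma square_integrable_bounded:
  fixes u :: "'a \<Rightarrow> real"
  assumes "finite_measure M" "u \<in> borel_measurable M" "\<And>x. x \<in> space M \<Longrightarrow> \<bar>u x\<bar> \<le> c"
  shows "square_integrable M u"
proof -
  interpret finite_measure M by fact
  have "square_integrable M (\<lambda>_. c)"
    unfolding square_integrable_def by simp
  then show ?thesis
    by (rule square_integrable_dominated) (use assms in \<open>auto intro: order_trans[OF _ abs_ge_self]\<close>)
qed

lemma square_integrable_vec_nth:
  fixes g :: "'a \<Rightarrow> real^'m"
  assumes "g \<in> borel_measurable M" "integrable M (\<lambda>x. (norm (g x))\<^sup>2)"
  shows "square_integrable M (\<lambda>x. g x $ a)"
proof (rule square_integrable_dominated)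
  show "square_integrable M (\<lambda>x. norm (g x))"
    using assms unfolding square_integrable_def by auto
  have "(\<lambda>v. v $ a) \<in> borel_measurable (borel :: (real^'m) measure)"
    by (intro borel_measurable_continuous_onI continuous_on_component continuous_on_id)
  then show "(\<lambda>x. g x $ a) \<in> borel_measurable M"
    using measurable_compose[OF assms(1), of "\<lambda>v. v $ a"] by simp
qed (simp add: component_le_norm_cart)

lemma square_integrable_integrable:
  assumes "finite_measure M" "square_integrable M u"
  shows "integrable M u"
proof -
  interpret finite_measure M by fact
  have "square_integrable M (\<lambda>_. 1)" unfolding square_integrable_def by simp
  from square_integrable_mult_integrable[OF assms(2) this] show ?thesis by simp
qed

lemma abs_integral_mult_le_AM_GM:
  assumes u: "square_integrable M u" and w: "square_integrable M w" and e: "e > 0"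
  shows "\<bar>integral\<^sup>L M (\<lambda>x. u x * w x)\<bar>
    \<le> integral\<^sup>L M (\<lambda>x. (u x)\<^sup>2) / (2 * e) + e / 2 * integral\<^sup>L M (\<lambda>x. (w x)\<^sup>2)"
proof -
  have "\<bar>u x * w x\<bar> \<le> (u x)\<^sup>2 / (2 * e) + e / 2 * (w x)\<^sup>2" for x
  proof -
    have "0 \<le> (\<bar>u x\<bar> - e * \<bar>w x\<bar>)\<^sup>2 / (2 * e)" using e by simp
    then show ?thesis using e by (simp add: abs_mult power2_eq_square field_simps)
  qed
  then have "\<bar>integral\<^sup>L M (\<lambda>x. u x * w x)\<bar> \<le> integral\<^sup>L M (\<lambda>x. (u x)\<^sup>2 / (2 * e) + e / 2 * (w x)\<^sup>2)"
    using square_integrable_mult_integrable[OF u w] u w unfolding square_integrable_def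
    by (intro abs_integral_le_integral) auto
  also have "\<dots> = integral\<^sup>L M (\<lambda>x. (u x)\<^sup>2) / (2 * e) + e / 2 * integral\<^sup>L M (\<lambda>x. (w x)\<^sup>2)"
    using u w unfolding square_integrable_def by simp
  finally show ?thesis .
qed

lemma uniform_limit_integral_mult_zero:
  assumes u: "\<And>n. square_integrable M (u n)" and u_lim: "(\<lambda>n. integral\<^sup>L M (\<lambda>x. (u n x)\<^sup>2)) \<longlonglongrightarrow> 0"
    and w: "\<And>s. s \<in> S \<Longrightarrow> square_integrable M (w s)"
    and w_bound: "\<And>s. s \<in> S \<Longrightarrow> integral\<^sup>L M (\<lambda>x. (w s x)\<^sup>2) \<le> W"
  shows "uniform_limit S (\<lambda>n s. integral\<^sup>L M (\<lambda>x. u n x * w s x)) (\<lambda>_. 0) sequentially"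
proof (rule uniform_limitI)
  fix \<epsilon> :: real assume \<epsilon>: "\<epsilon> > 0"
  define e where "e = \<epsilon> / (\<bar>W\<bar> + 1)"
  have W: "\<bar>W\<bar> + 1 > 0" by (simp add: add_nonneg_pos)
  have e: "e > 0" "e / 2 * W \<le> \<epsilon> / 2"
  proof -
    show "e > 0" unfolding e_def using \<epsilon> W by simp
    have "e * W \<le> e * (\<bar>W\<bar> + 1)" using \<open>e > 0\<close> by (intro mult_left_mono) auto
    also have "\<dots> = \<epsilon>" unfolding e_def using W by simp
    finally show "e / 2 * W \<le> \<epsilon> / 2" by simp
  qed
  have "\<forall>\<^sub>F n in sequentially. integral\<^sup>L M (\<lambda>x. (u n x)\<^sup>2) < \<epsilon> * e"
    using order_tendstoD(2)[OF u_lim] \<epsilon> e by simp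
  then show "\<forall>\<^sub>F n in sequentially. \<forall>s\<in>S. dist (integral\<^sup>L M (\<lambda>x. u n x * w s x)) 0 < \<epsilon>"
  proof (rule eventually_mono, intro ballI)
    fix n s assume n: "integral\<^sup>L M (\<lambda>x. (u n x)\<^sup>2) < \<epsilon> * e" and s: "s \<in> S"
    have "integral\<^sup>L M (\<lambda>x. (u n x)\<^sup>2) / (2 * e) < \<epsilon> / 2"
      using n e by (simp add: field_simps)
    moreover have "e / 2 * integral\<^sup>L M (\<lambda>x. (w s x)\<^sup>2) \<le> \<epsilon> / 2"
      using mult_left_mono[OF w_bound[OF s], of "e / 2"] e by linarith
    ultimately show "dist (integral\<^sup>L M (\<lambda>x. u n x * w s x)) 0 < \<epsilon>"
      using abs_integral_mult_le_AM_GM[OF u[of n] w[OF s] e(1)] unfolding dist_real_def diff_zero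
      by linarith
  qed
qed

lemma integral_mult_tendsto_uniform_limit:
  fixes F :: "nat \<Rightarrow> 'a \<Rightarrow> real"
  assumes F: "uniform_limit (space M) F h sequentially" and w: "integrable M w"
    and Fw: "\<And>n. integrable M (\<lambda>x. F n x * w x)" and hw: "integrable M (\<lambda>x. h x * w x)"
  shows "(\<lambda>n. integral\<^sup>L M (\<lambda>x. F n x * w x)) \<longlonglongrightarrow> integral\<^sup>L M (\<lambda>x. h x * w x)"
proof (rule tendstoI)
  fix \<epsilon> :: real assume \<epsilon>: "\<epsilon> > 0"
  define \<delta> where "\<delta> = \<epsilon> / (integral\<^sup>L M (\<lambda>x. \<bar>w x\<bar>) + 1)"
  have W: "integral\<^sup>L M (\<lambda>x. \<bar>w x\<bar>) + 1 > 0" by (simp add: add_nonneg_pos)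
  have \<delta>: "\<delta> > 0" "\<delta> * integral\<^sup>L M (\<lambda>x. \<bar>w x\<bar>) < \<epsilon>"
    unfolding \<delta>_def using \<epsilon> W by (simp_all add: field_simps)
  show "\<forall>\<^sub>F n in sequentially. dist (integral\<^sup>L M (\<lambda>x. F n x * w x)) (integral\<^sup>L M (\<lambda>x. h x * w x)) < \<epsilon>"
    using uniform_limitD[OF F \<delta>(1)]
  proof (rule eventually_mono)
    fix n assume close: "\<forall>x\<in>space M. dist (F n x) (h x) < \<delta>"
    have "\<bar>integral\<^sup>L M (\<lambda>x. F n x * w x) - integral\<^sup>L M (\<lambda>x. h x * w x)\<bar>
        = \<bar>integral\<^sup>L M (\<lambda>x. (F n x - h x) * w x)\<bar>"
      using Fw hw by (simp add: left_diff_distrib)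
    also have "\<dots> \<le> integral\<^sup>L M (\<lambda>x. \<delta> * \<bar>w x\<bar>)"
    proof (rule abs_integral_le_integral)
      show "integrable M (\<lambda>x. (F n x - h x) * w x)" using Fw hw by (simp add: left_diff_distrib)
      show "integrable M (\<lambda>x. \<delta> * \<bar>w x\<bar>)" using w by simp
      fix x assume "x \<in> space M"
      then show "\<bar>(F n x - h x) * w x\<bar> \<le> \<delta> * \<bar>w x\<bar>"
        using close by (auto simp: abs_mult dist_real_def intro!: mult_right_mono)
    qed
    also have "\<dots> < \<epsilon>" using \<delta> by simp
    finally show "dist (integral\<^sup>L M (\<lambda>x. F n x * w x)) (integral\<^sup>L M (\<lambda>x. h x * w x)) < \<epsilon>"
      by (simp add: dist_real_def)
  qed
qed

lemma sint_dens_smeasure: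
  fixes h u :: "real \<Rightarrow> real"
  assumes h: "h \<in> borel_measurable M" and u: "u \<in> borel_measurable M"
    and hu: "integrable M (\<lambda>t. h t * u t)"
  shows "sint (dens_smeasure M h) u = integral\<^sup>L M (\<lambda>t. h t * u t)"
proof -
  have parts: "integrable M (\<lambda>t. max 0 (s * h t) * u t)" if "s = 1 \<or> s = -1" for s
    by (rule Bochner_Integration.integrable_bound[OF hu]) (use h u that in \<open>auto simp: abs_mult intro!: AE_I2 mult_right_mono\<close>)
  have "sint (dens_smeasure M h) u
      = integral\<^sup>L M (\<lambda>t. max 0 (h t) * u t) - integral\<^sup>L M (\<lambda>t. max 0 (- h t) * u t)"
    unfolding sint_def dens_smeasure_def using h u by (simp add: integral_density)
  also have "\<dots> = integral\<^sup>L M (\<lambda>t. max 0 (h t) * u t - max 0 (- h t) * u t)"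
    using parts[of 1] parts[of "-1"] by simp
  also have "\<dots> = integral\<^sup>L M (\<lambda>t. h t * u t)"
    by (rule Bochner_Integration.integral_cong) (auto simp: max_def)
  finally show ?thesis .
qed

lemma fin_smeasure_dens_smeasure:
  fixes h :: "real \<Rightarrow> real"
  assumes sets: "sets M = sets (restrict_space borel {A..B})" and h: "integrable M h"
  shows "fin_smeasure A B (dens_smeasure M h)"
proof -
  have "finite_measure (density M (\<lambda>t. ennreal (max 0 (s * h t))))" if "s = 1 \<or> s = -1" for s
  proof (rule finite_measureI)
    have "emeasure (density M (\<lambda>t. ennreal (max 0 (s * h t)))) (space M)
        = (\<integral>\<^sup>+ t. ennreal (max 0 (s * h t)) \<partial>M)"
      using h by (subst emeasure_density) (auto intro!: nn_integral_cong)
    also have "\<dots> \<le> (\<integral>\<^sup>+ t. ennreal (norm (h t)) \<partial>M)"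
      using that by (intro nn_integral_mono ennreal_leI) auto
    also have "\<dots> < \<infinity>"
      using h unfolding integrable_iff_bounded by blast
    finally show "emeasure (density M (\<lambda>t. ennreal (max 0 (s * h t))))
        (space (density M (\<lambda>t. ennreal (max 0 (s * h t))))) \<noteq> \<infinity>"
      by simp
  qed
  from this[of 1] this[of "-1"] show ?thesis
    unfolding fin_smeasure_def dens_smeasure_def using sets by simp
qed

lemma sint_dens_smeasure_matrix_vector_mult:
  fixes g :: "real \<Rightarrow> real^'m" and P :: "real^'m^'n"
  assumes g: "\<And>a. square_integrable M (\<lambda>t. g t $ a)" and u: "square_integrable M u"
  shows "sint (dens_smeasure M (\<lambda>t. (P *v g t) $ i)) u
    = (P *v (\<chi> a. integral\<^sup>L M (\<lambda>t. g t $ a * u t))) $ i"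
proof -
  have Pg: "(P *v g t) $ i = (\<Sum>a\<in>UNIV. P $ i $ a * g t $ a)" for t
    by (simp add: matrix_vector_mult_def)
  have Pg_sq_int: "square_integrable M (\<lambda>t. (P *v g t) $ i)"
    unfolding Pg by (intro square_integrable_sum square_integrable_cmult g) simp
  have "sint (dens_smeasure M (\<lambda>t. (P *v g t) $ i)) u = integral\<^sup>L M (\<lambda>t. (P *v g t) $ i * u t)"
    using Pg_sq_int u square_integrable_mult_integrable[OF Pg_sq_int u]
    unfolding square_integrable_def by (intro sint_dens_smeasure) auto
  also have "\<dots> = (\<Sum>a\<in>UNIV. P $ i $ a * integral\<^sup>L M (\<lambda>t. g t $ a * u t))"
    unfolding Pg sum_distrib_right
    using square_integrable_mult_integrable[OF g u] by (simp add: mult.assoc)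
  finally show ?thesis
    by (simp add: matrix_vector_mult_def)
qed

section \<open>The eigenexpansion of the kernel\<close>

lemma scaleR_matrix_vector_mult:
  fixes X :: "real^'n^'m"
  shows "(r *\<^sub>R X) *v w = r *\<^sub>R (X *v w)"
  by (simp add: vec_eq_iff matrix_vector_mult_def sum_distrib_left mult.assoc)

lemma outer_matrix_vector_mult:
  fixes u v w :: "real^'m"
  shows "outer u v *v w = (v \<bullet> w) *\<^sub>R u"
  by (simp add: vec_eq_iff outer_def matrix_vector_mult_def inner_vec_def sum_distrib_left mult_ac)

locale kernel_eigen_expansion = finite_measure \<nu>
  for \<nu> :: "real measure" +
  fixes A B :: real and K :: "real \<Rightarrow> real \<Rightarrow> real"
    and \<phi> :: "nat \<Rightarrow> real \<Rightarrow> real" and lam :: "nat \<Rightarrow> real"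
    and f :: "real \<Rightarrow> real^'m" and q :: "nat \<Rightarrow> real^'m" and g :: "real \<Rightarrow> real^'m"
  assumes sets_eq: "sets \<nu> = sets (restrict_space borel {A..B})"
    and K_cont: "continuous_on ({A..B} \<times> {A..B}) (\<lambda>(t, s). K t s)"
    and phi_sq_int: "\<And>l. square_integrable \<nu> (\<phi> l)"
    and phi_orthonormal: "\<And>k l. integral\<^sup>L \<nu> (\<lambda>t. \<phi> k t * \<phi> l t) = (if k = l then 1 else 0)"
    and lam_pos: "\<And>l. lam l > 0"
    and eigen: "\<And>l s. s \<in> {A..B} \<Longrightarrow> integral\<^sup>L \<nu> (\<lambda>t. K t s * \<phi> l t) = lam l * \<phi> l s"
    and f_expansion: "\<And>t. t \<in> {A..B} \<Longrightarrow> (\<lambda>l. \<phi> l t *\<^sub>R q l) sums f t"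
    and g_sq_int: "\<And>a. square_integrable \<nu> (\<lambda>t. g t $ a)"
    and g_expansion: "(\<lambda>n. integral\<^sup>L \<nu>
                   (\<lambda>t. (norm (g t - (\<Sum>l<n. (\<phi> l t / lam l) *\<^sub>R q l)))\<^sup>2)) \<longlonglongrightarrow> 0"
begin

lemma space_eq: "space \<nu> = {A..B}"
  using sets_eq_imp_space_eq[OF sets_eq] by simp

lemma g_integrable: "integrable \<nu> (\<lambda>t. g t $ a)"
  by (rule square_integrable_integrable[OF finite_measure_axioms g_sq_int])

lemma kernel_slice_sq_int: "s \<in> {A..B} \<Longrightarrow> square_integrable \<nu> (\<lambda>t. K t s)"
proof -
  assume s: "s \<in> {A..B}"
  obtain c where "\<And>t s. t \<in> {A..B} \<Longrightarrow> s \<in> {A..B} \<Longrightarrow> \<bar>K t s\<bar> \<le> c"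
    using continuous_kernel_bounded[OF K_cont] by blast
  moreover have "(\<lambda>t. K t s) \<in> borel_measurable \<nu>"
    using continuous_kernel_slice_measurable[OF K_cont s] measurable_cong_sets[OF sets_eq refl] by blast
  ultimately show ?thesis
    using s space_eq by (intro square_integrable_bounded[OF finite_measure_axioms]) auto
qed

lemma kernel_slice_sq_integral_bounded:
  obtains W where "\<And>s. s \<in> {A..B} \<Longrightarrow> integral\<^sup>L \<nu> (\<lambda>t. (K t s)\<^sup>2) \<le> W"
proof -
  obtain c where c: "\<And>t s. t \<in> {A..B} \<Longrightarrow> s \<in> {A..B} \<Longrightarrow> \<bar>K t s\<bar> \<le> c"
    using continuous_kernel_bounded[OF K_cont] by blast
  have "integral\<^sup>L \<nu> (\<lambda>t. (K t s)\<^sup>2) \<le> integral\<^sup>L \<nu> (\<lambda>_. c\<^sup>2)" if s: "s \<in> {A..B}" for s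
    using kernel_slice_sq_int[OF s] c[OF _ s] space_eq unfolding square_integrable_def
    by (intro integral_mono) (auto simp: abs_le_square_iff[symmetric] intro: order_trans[OF _ abs_ge_self])
  then show ?thesis using that by blast
qed

definition g_partial :: "nat \<Rightarrow> real \<Rightarrow> real^'m" where
  "g_partial n t = (\<Sum>l<n. (\<phi> l t / lam l) *\<^sub>R q l)"

definition f_partial :: "nat \<Rightarrow> real \<Rightarrow> real^'m" where
  "f_partial n t = (\<Sum>l<n. \<phi> l t *\<^sub>R q l)"

lemma g_partial_nth: "g_partial n t $ a = (\<Sum>l<n. q l $ a / lam l * \<phi> l t)"
  unfolding g_partial_def by (simp add: mult.commute)

lemma f_partial_nth: "f_partial n t $ a = (\<Sum>l<n. q l $ a * \<phi> l t)"
  unfolding f_partial_def by (simp add: mult.commute)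

lemma g_partial_sq_int: "square_integrable \<nu> (\<lambda>t. g_partial n t $ a)"
  unfolding g_partial_nth by (intro square_integrable_sum square_integrable_cmult phi_sq_int) simp

lemma f_partial_sq_int: "square_integrable \<nu> (\<lambda>t. f_partial n t $ a)"
  unfolding f_partial_nth by (intro square_integrable_sum square_integrable_cmult phi_sq_int) simp

lemma integral_partial_sum_mult:
  assumes "square_integrable \<nu> w"
  shows "integral\<^sup>L \<nu> (\<lambda>t. (\<Sum>l<n. c l * \<phi> l t) * w t) = (\<Sum>l<n. c l * integral\<^sup>L \<nu> (\<lambda>t. \<phi> l t * w t))"
  using square_integrable_mult_integrable[OF phi_sq_int assms]
  by (simp add: sum_distrib_right mult.assoc)

lemma g_remainder_tendsto_zero:
  "(\<lambda>n. integral\<^sup>L \<nu> (\<lambda>t. (g t $ a - g_partial n t $ a)\<^sup>2)) \<longlonglongrightarrow> 0"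
proof (rule tendsto_sandwich[OF _ _ tendsto_const g_expansion[folded g_partial_def]])
  have sq_int: "square_integrable \<nu> (\<lambda>t. g t $ b - g_partial n t $ b)" for n b
    by (rule square_integrable_diff[OF g_sq_int g_partial_sq_int])
  have norm_sq: "(norm (g t - g_partial n t))\<^sup>2 = (\<Sum>b\<in>UNIV. (g t $ b - g_partial n t $ b)\<^sup>2)" for n t
    unfolding power2_norm_eq_inner inner_vec_def by (simp add: power2_eq_square)
  show "\<forall>\<^sub>F n in sequentially. integral\<^sup>L \<nu> (\<lambda>t. (g t $ a - g_partial n t $ a)\<^sup>2)
      \<le> integral\<^sup>L \<nu> (\<lambda>t. (norm (g t - g_partial n t))\<^sup>2)"
    unfolding norm_sq using sq_int unfolding square_integrable_def
    by (intro always_eventually allI integral_mono member_le_sum) auto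
qed simp

lemma integral_g_mult_phi: "integral\<^sup>L \<nu> (\<lambda>t. g t $ a * \<phi> l t) = q l $ a / lam l"
proof -
  have "uniform_limit {l} (\<lambda>n l. integral\<^sup>L \<nu> (\<lambda>t. (g t $ a - g_partial n t $ a) * \<phi> l t)) (\<lambda>_. 0)
      sequentially"
    using phi_orthonormal[of l l]
    by (intro uniform_limit_integral_mult_zero[where W = 1] square_integrable_diff g_sq_int
        g_partial_sq_int g_remainder_tendsto_zero phi_sq_int) (simp add: power2_eq_square)
  then have "(\<lambda>n. integral\<^sup>L \<nu> (\<lambda>t. g t $ a * \<phi> l t) - integral\<^sup>L \<nu> (\<lambda>t. g_partial n t $ a * \<phi> l t))
      \<longlonglongrightarrow> 0"
    using square_integrable_mult_integrable[OF g_sq_int phi_sq_int]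
      square_integrable_mult_integrable[OF g_partial_sq_int phi_sq_int]
    by (simp add: left_diff_distrib)
  moreover have "integral\<^sup>L \<nu> (\<lambda>t. g_partial n t $ a * \<phi> l t) = q l $ a / lam l" if "n > l" for n
    unfolding g_partial_nth integral_partial_sum_mult[OF phi_sq_int] phi_orthonormal
    using that by (simp add: if_distrib sum.delta cong: if_cong)
  ultimately have "(\<lambda>n. integral\<^sup>L \<nu> (\<lambda>t. g t $ a * \<phi> l t) - q l $ a / lam l) \<longlonglongrightarrow> 0"
    by (elim Lim_transform_eventually) (auto intro: eventually_sequentiallyI[of "Suc l"])
  then show ?thesis
    by (simp add: LIMSEQ_const_iff)
qed

lemma kernel_transform_g_partial:
  assumes "s \<in> {A..B}"
  shows "integral\<^sup>L \<nu> (\<lambda>t. g_partial n t $ a * K t s) = f_partial n s $ a"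
proof -
  have "integral\<^sup>L \<nu> (\<lambda>t. g_partial n t $ a * K t s) = (\<Sum>l<n. q l $ a / lam l * (lam l * \<phi> l s))"
    unfolding g_partial_nth integral_partial_sum_mult[OF kernel_slice_sq_int[OF assms]]
    using eigen[OF assms] by (simp add: mult.commute)
  also have "\<dots> = f_partial n s $ a"
    unfolding f_partial_nth using lam_pos by (intro sum.cong) (auto simp: less_imp_neq[symmetric])
  finally show ?thesis .
qed

lemma uniform_limit_f_partial_kernel_transform:
  "uniform_limit {A..B} (\<lambda>n s. f_partial n s $ a) (\<lambda>s. integral\<^sup>L \<nu> (\<lambda>t. g t $ a * K t s)) sequentially"
proof -
  obtain W where W: "\<And>s. s \<in> {A..B} \<Longrightarrow> integral\<^sup>L \<nu> (\<lambda>t. (K t s)\<^sup>2) \<le> W"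
    using kernel_slice_sq_integral_bounded by blast
  have "uniform_limit {A..B} (\<lambda>n s. integral\<^sup>L \<nu> (\<lambda>t. (g t $ a - g_partial n t $ a) * K t s)) (\<lambda>_. 0)
      sequentially"
    by (intro uniform_limit_integral_mult_zero[OF square_integrable_diff[OF g_sq_int g_partial_sq_int]
          g_remainder_tendsto_zero kernel_slice_sq_int W])
  moreover have "integral\<^sup>L \<nu> (\<lambda>t. (g t $ a - g_partial n t $ a) * K t s)
      = integral\<^sup>L \<nu> (\<lambda>t. g t $ a * K t s) - f_partial n s $ a" if "s \<in> {A..B}" for n s
    using square_integrable_mult_integrable[OF g_sq_int kernel_slice_sq_int[OF that]]
      square_integrable_mult_integrable[OF g_partial_sq_int kernel_slice_sq_int[OF that]]
    by (simp add: left_diff_distrib kernel_transform_g_partial[OF that])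
  ultimately show ?thesis
    unfolding uniform_limit_iff by (auto simp: dist_real_def abs_minus_commute)
qed

lemma kernel_transform_g:
  assumes "s \<in> {A..B}"
  shows "integral\<^sup>L \<nu> (\<lambda>t. g t $ a * K t s) = f s $ a"
proof -
  have "(\<lambda>n. f_partial n s) \<longlonglongrightarrow> f s"
    using f_expansion[OF assms] unfolding sums_def f_partial_def .
  then have "(\<lambda>n. f_partial n s $ a) \<longlonglongrightarrow> f s $ a"
    by (rule tendsto_vec_nth)
  moreover have "(\<lambda>n. f_partial n s $ a) \<longlonglongrightarrow> integral\<^sup>L \<nu> (\<lambda>t. g t $ a * K t s)"
    by (rule tendsto_uniform_limitI[OF uniform_limit_f_partial_kernel_transform assms])
  ultimately show ?thesis
    using LIMSEQ_unique by metis
qed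

lemma uniform_limit_f_partial: "uniform_limit {A..B} (\<lambda>n s. f_partial n s $ a) (\<lambda>s. f s $ a) sequentially"
  using uniform_limit_f_partial_kernel_transform
  unfolding uniform_limit_iff by (auto simp: kernel_transform_g)

lemma f_sq_int: "square_integrable \<nu> (\<lambda>s. f s $ a)"
proof -
  obtain c where c: "\<And>t s. t \<in> {A..B} \<Longrightarrow> s \<in> {A..B} \<Longrightarrow> \<bar>K t s\<bar> \<le> c"
    using continuous_kernel_bounded[OF K_cont] by blast
  have "(\<lambda>s. f s $ a) \<in> borel_measurable \<nu>"
  proof (rule borel_measurable_LIMSEQ_real)
    show "(\<lambda>n. f_partial n s $ a) \<longlonglongrightarrow> f s $ a" if "s \<in> space \<nu>" for s
      using tendsto_uniform_limitI[OF uniform_limit_f_partial] that space_eq by simp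
    show "(\<lambda>s. f_partial n s $ a) \<in> borel_measurable \<nu>" for n
      using f_partial_sq_int unfolding square_integrable_def by blast
  qed
  moreover have "\<bar>f s $ a\<bar> \<le> c * integral\<^sup>L \<nu> (\<lambda>t. \<bar>g t $ a\<bar>)" if s: "s \<in> {A..B}" for s
  proof -
    have "\<bar>integral\<^sup>L \<nu> (\<lambda>t. g t $ a * K t s)\<bar> \<le> integral\<^sup>L \<nu> (\<lambda>t. c * \<bar>g t $ a\<bar>)"
      using square_integrable_mult_integrable[OF g_sq_int kernel_slice_sq_int[OF s]]
        g_integrable c[OF _ s] space_eq
      by (intro abs_integral_le_integral) (auto simp: abs_mult mult.commute intro!: mult_right_mono)
    then show ?thesis using kernel_transform_g[OF s] by simp
  qed
  ultimately show ?thesis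
    using space_eq by (intro square_integrable_bounded[OF finite_measure_axioms]) auto
qed

definition moment_matrix :: "real^'m^'m" where
  "moment_matrix = (\<chi> a b. integral\<^sup>L \<nu> (\<lambda>t. g t $ a * f t $ b))"

lemma moment_matrix_sums: "(\<lambda>l. (1 / lam l) *\<^sub>R outer (q l) (q l)) sums moment_matrix"
  unfolding sums_def moment_matrix_def
proof (intro vec_tendstoI)
  fix a b
  have phi_g: "integral\<^sup>L \<nu> (\<lambda>t. \<phi> l t * g t $ a) = q l $ a / lam l" for l
    by (subst mult.commute) (rule integral_g_mult_phi)
  have "(\<Sum>l<n. (1 / lam l) *\<^sub>R outer (q l) (q l)) $ a $ b = integral\<^sup>L \<nu> (\<lambda>t. f_partial n t $ b * g t $ a)"
    for n
    unfolding f_partial_nth integral_partial_sum_mult[OF g_sq_int]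
    by (simp add: outer_def sum_component phi_g mult.commute)
  moreover have "(\<lambda>n. integral\<^sup>L \<nu> (\<lambda>t. f_partial n t $ b * g t $ a)) \<longlonglongrightarrow> integral\<^sup>L \<nu> (\<lambda>t. f t $ b * g t $ a)"
    using uniform_limit_f_partial square_integrable_mult_integrable[OF g_sq_int f_partial_sq_int]
      square_integrable_mult_integrable[OF g_sq_int f_sq_int]
      g_integrable
    by (intro integral_mult_tendsto_uniform_limit) (auto simp: space_eq mult.commute)
  ultimately show "(\<lambda>n. (\<Sum>l<n. (1 / lam l) *\<^sub>R outer (q l) (q l)) $ a $ b)
      \<longlonglongrightarrow> (\<chi> a b. integral\<^sup>L \<nu> (\<lambda>t. g t $ a * f t $ b)) $ a $ b"
    by (simp add: mult.commute)
qed

lemma moment_matrix_mult: "(\<chi> a. integral\<^sup>L \<nu> (\<lambda>t. g t $ a * (\<theta> \<bullet> f t))) = moment_matrix *v \<theta>"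
  using square_integrable_mult_integrable[OF g_sq_int f_sq_int]
  by (simp add: vec_eq_iff moment_matrix_def matrix_vector_mult_def inner_vec_def
      sum_distrib_left mult_ac)

lemma moment_matrix_invertible:
  assumes f_indep: "\<And>c. (\<forall>t\<in>{A..B}. c \<bullet> f t = 0) \<Longrightarrow> c = 0"
  shows "invertible moment_matrix"
  unfolding invertible_left_inverse matrix_left_invertible_ker
proof (intro allI impI)
  fix c :: "real^'m" assume "moment_matrix *v c = 0"
  have "bounded_linear (\<lambda>X :: real^'m^'m. c \<bullet> (X *v c))"
    by (intro bounded_linear_compose[OF bounded_linear_inner_right] linear_conv_bounded_linear[THEN iffD1])
      (simp add: linear_iff scaleR_matrix_vector_mult matrix_vector_mult_add_rdistrib)
  from bounded_linear.sums[OF this moment_matrix_sums]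
  have "(\<lambda>l. (c \<bullet> q l)\<^sup>2 / lam l) sums 0"
    using \<open>moment_matrix *v c = 0\<close>
    by (simp add: scaleR_matrix_vector_mult outer_matrix_vector_mult inner_commute power2_eq_square)
  then have sq0: "(c \<bullet> q l)\<^sup>2 / lam l = 0" for l
    using suminf_eq_zero_iff[of "\<lambda>l. (c \<bullet> q l)\<^sup>2 / lam l"] lam_pos
    by (simp add: sums_iff less_imp_le)
  have cq: "c \<bullet> q l = 0" for l
    using sq0[of l] lam_pos[of l] by simp
  have "c \<bullet> f t = 0" if "t \<in> {A..B}" for t
  proof -
    have "(\<lambda>n. c \<bullet> f_partial n t) \<longlonglongrightarrow> c \<bullet> f t"
      using f_expansion[OF that] unfolding sums_def f_partial_def by (intro tendsto_inner tendsto_const)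
    then have "(\<lambda>n. 0) \<longlonglongrightarrow> c \<bullet> f t"
      by (simp add: f_partial_def inner_sum_right cq)
    then show ?thesis
      by (metis LIMSEQ_const_iff)
  qed
  then show "c = 0" by (rule f_indep[rule_format])
qed

lemma dens_estimator:
  assumes P: "P ** moment_matrix = mat 1"
  defines "G \<equiv> \<lambda>i. dens_smeasure \<nu> (\<lambda>t. (P *v g t) $ i)"
  shows "unbiased A B f G" and "\<And>i s. s \<in> {A..B} \<Longrightarrow> sint (G i) (\<lambda>t. K t s) = P $ i \<bullet> f s"
proof -
  have Pg: "(P *v g t) $ i = (\<Sum>a\<in>UNIV. P $ i $ a * g t $ a)" for i t
    by (simp add: matrix_vector_mult_def)
  have "fin_smeasure A B (G i)" for i
    unfolding G_def Pg
    by (intro fin_smeasure_dens_smeasure[OF sets_eq] square_integrable_integrable[OF finite_measure_axioms]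
        square_integrable_sum square_integrable_cmult g_sq_int) simp
  moreover have "sint (G i) (\<lambda>t. \<theta> \<bullet> f t) = \<theta> $ i" for \<theta> i
  proof -
    have \<theta>f: "square_integrable \<nu> (\<lambda>t. \<theta> \<bullet> f t)"
      unfolding inner_vec_def inner_real_def
      by (intro square_integrable_sum square_integrable_cmult f_sq_int) simp
    have "sint (G i) (\<lambda>t. \<theta> \<bullet> f t) = (P *v (moment_matrix *v \<theta>)) $ i"
      unfolding G_def sint_dens_smeasure_matrix_vector_mult[OF g_sq_int \<theta>f] moment_matrix_mult ..
    then show ?thesis by (simp add: matrix_vector_mul_assoc P)
  qed
  ultimately show "unbiased A B f G"
    unfolding unbiased_def by (simp add: vec_eq_iff)
  show "sint (G i) (\<lambda>t. K t s) = P $ i \<bullet> f s" if "s \<in> {A..B}" for i s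
    unfolding G_def sint_dens_smeasure_matrix_vector_mult[OF g_sq_int kernel_slice_sq_int[OF that]]
    by (simp add: kernel_transform_g[OF that] matrix_vector_mul_component)
qed

end

lemma matrix_inv_left:
  fixes X :: "real^'m^'m"
  assumes "invertible X"
  shows "matrix_inv X ** X = mat 1"
  using assms unfolding invertible_def matrix_inv_def by (rule someI2_ex) auto

theorem proposition2p4:
  fixes A B :: real and p :: "real \<Rightarrow> real" and \<nu> :: "real measure"
    and K :: "real \<Rightarrow> real \<Rightarrow> real"
    and \<phi> :: "nat \<Rightarrow> real \<Rightarrow> real" and lam :: "nat \<Rightarrow> real"
    and f :: "real \<Rightarrow> real^'m" and q :: "nat \<Rightarrow> real^'m"
    and g :: "real \<Rightarrow> real^'m"
  assumes AB: "A < B"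
    and nu_def: "\<nu> = density (restrict_space lborel {A..B}) (\<lambda>t. ennreal (p t))"
    and p_meas: "p \<in> borel_measurable (restrict_space lborel {A..B})"
    and p_pos: "\<forall>t\<in>{A..B}. p t > 0"
    and nu_fin: "emeasure \<nu> {A..B} < \<infinity>"
    and K_cont: "continuous_on ({A..B} \<times> {A..B}) (\<lambda>(t, s). K t s)"
    and K_cov: "cov_kernel A B K"
    and phi_L2: "\<forall>l. \<phi> l \<in> borel_measurable \<nu> \<and> integrable \<nu> (\<lambda>t. (\<phi> l t)\<^sup>2)"
    and phi_on: "\<forall>k l. integral\<^sup>L \<nu> (\<lambda>t. \<phi> k t * \<phi> l t) = (if k = l then 1 else 0)"
    and eigen: "\<forall>l. lam l > 0 \<and>
                  (\<forall>s\<in>{A..B}. integral\<^sup>L \<nu> (\<lambda>t. K t s * \<phi> l t) = lam l * \<phi> l s)"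
    and f_exp: "\<forall>t\<in>{A..B}. (\<lambda>l. \<phi> l t *\<^sub>R q l) sums f t"
    and f_indep: "\<forall>c::real^'m. (\<forall>t\<in>{A..B}. c \<bullet> f t = 0) \<longrightarrow> c = 0"
    and g_L2: "g \<in> borel_measurable \<nu> \<and> integrable \<nu> (\<lambda>t. (norm (g t))\<^sup>2)"
    and g_lim: "(\<lambda>n. integral\<^sup>L \<nu>
                   (\<lambda>t. (norm (g t - (\<Sum>l<n. (\<phi> l t / lam l) *\<^sub>R q l)))\<^sup>2)) \<longlonglongrightarrow> 0"
  defines "C \<equiv> (\<Sum>l. (1 / lam l) *\<^sub>R outer (q l) (q l))"
  defines "G \<equiv> (\<lambda>i. dens_smeasure \<nu> (\<lambda>t. (matrix_inv C *v g t) $ i))"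
  shows "summable (\<lambda>l. (1 / lam l) *\<^sub>R outer (q l) (q l))
         \<and> BLUE A B f K G \<and> covm K G = matrix_inv C"
proof -
  \<comment> \<open>p enters only through the sets and the finiteness of \<nu>\<close>
  have sets_nu: "sets \<nu> = sets (restrict_space borel {A..B})"
    unfolding nu_def by (simp add: sets_restrict_space)
  interpret kernel_eigen_expansion \<nu> A B K \<phi> lam f q g
  proof (intro kernel_eigen_expansion.intro kernel_eigen_expansion_axioms.intro finite_measureI)
    show "emeasure \<nu> (space \<nu>) \<noteq> \<infinity>"
      using nu_fin sets_eq_imp_space_eq[OF sets_nu] by simp
    show "square_integrable \<nu> (\<lambda>t. g t $ a)" for a
      using square_integrable_vec_nth g_L2 by blast
  qed (use sets_nu K_cont phi_L2 phi_on eigen f_exp g_lim in \<open>simp_all add: square_integrable_def\<close>)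
  have C: "C = moment_matrix"
    unfolding C_def using moment_matrix_sums by (rule sums_unique[symmetric])
  have "matrix_inv C ** moment_matrix = mat 1"
    using matrix_inv_left moment_matrix_invertible f_indep unfolding C by blast
  note G = dens_estimator[OF this]
  show ?thesis
    unfolding G_def
    using sums_summable[OF moment_matrix_sums] BLUE_if_kernel_transform[OF AB K_cont K_cov G] by blast
qed

end
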